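(* Let $A_1$ be the real $2\times2\times2$ symmetric tensor with $a_{111}=1$, $a_{222}=1$ and all other entries $0$ (associated cubic $x^3+y^3$), and let $A_2$ be the real $2\times2\times2$ symmetric tensor with $a_{111}=1$, $a_{122}=a_{212}=a_{221}=-1$ and all other entries $0$ (associated cubic $x^3-3xy^2$). Then $A_1$ and $A_2$ are not $\operatorname{GL}_2(\mathbb{R})$-equivalent, but they have the same number of eigenpair classes and the same number of zero eigenvalues (both have $3$ eigenpair classes, none with zero eigenvalue).
   Context: Two real symmetric tensors $A,B$ of order $m$ and dimension $n$ are $\operatorname{GL}_n(\mathbb{R})$-equivalent if there is $P=(p_{ij})\in\operatorname{GL}_n(\mathbb{R})$ with $b_{j_1\dots j_m}=\sum_{i_1,\dots,i_m} a_{i_1\dots i_m}p_{i_1j_1}\cdots p_{i_mj_m}$; equivalently, their associated forms $f(\mathbf{x})=\sum a_{i_1\dots i_m}x_{i_1}\cdots x_{i_m}$ are related by $f(\mathbf{x})\mapsto f(P\mathbf{x})$. An eigenpair of $A$ is $(\lambda,\mathbf{x})$ with $\lambda\in\mathbb{C}$, $\mathbf{x}\in\mathbb{C}^n\setminus\{0\}$ and $A\mathbf{x}^{m-1}=\lambda\mathbf{x}$, where $(A\mathbf{x}^{m-1})_i=\sum_{i_2,\dots,i_m}a_{i i_2\dots i_m}x_{i_2}\cdots x_{i_m}$. Two eigenpairs $(\lambda,\mathbf{x}),(\lambda',\mathbf{x}')$ are equivalent if $\lambda'=t^{m-2}\lambda$, $\mathbf{x}'=t\mathbf{x}$ for some $t\in\mathbb{C}\setminus\{0\}$;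 the classes are eigenpair classes. The number of zero eigenvalues is the number of eigenpair classes with eigenvalue $0$. *)

theory Defs
  imports "HOL-Analysis.Analysis" "HOL-Library.Numeral_Type"
begin

text \<open>A real tensor of order m and dimension n = CARD('n) is a function on index
  tuples (lists of length m over the finite index type 'n); only its values on
  lists of length m matter.\<close>

type_synonym 'n rtensor = "'n list \<Rightarrow> real"

definition index_tuples :: "nat \<Rightarrow> ('n::finite) list set" where
  "index_tuples m = {is. length is = m}"

definition symmetric_tensor :: "nat \<Rightarrow> ('n::finite) rtensor \<Rightarrow> bool" where
  "symmetric_tensor m A \<longleftrightarrow>
     (\<forall>is\<in>index_tuples m. \<forall>js. mset js = mset is \<longrightarrow> A js = A is)"

definition GL_equivalent :: "nat \<Rightarrow> ('n::finite) rtensor \<Rightarrow> 'n rtensor \<Rightarrow> bool" where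
  "GL_equivalent m A B \<longleftrightarrow>
     (\<exists>P :: real^'n^'n. invertible P \<and>
        (\<forall>js\<in>index_tuples m.
           B js = (\<Sum>is\<in>index_tuples m. A is * (\<Prod>k<m. P $ (is ! k) $ (js ! k)))))"

definition tensor_apply :: "nat \<Rightarrow> ('n::finite) rtensor \<Rightarrow> complex^'n \<Rightarrow> complex^'n" where
  "tensor_apply m A x = (\<chi> i. \<Sum>is\<in>index_tuples (m - 1).
      complex_of_real (A (i # is)) * (\<Prod>k<m - 1. x $ (is ! k)))"

definition eigenpairs :: "nat \<Rightarrow> ('n::finite) rtensor \<Rightarrow> (complex \<times> (complex^'n)) set" where
  "eigenpairs m A = {(lam, x). x \<noteq> 0 \<and> tensor_apply m A x = lam *s x}"

definition eigenpair_rel :: "nat \<Rightarrow> ('n::finite) rtensor \<Rightarrow> ((complex \<times> (complex^'n)) \<times> (complex \<times> (complex^'n))) set" where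
  "eigenpair_rel m A = {((lam, x), (mu, x')). (lam, x) \<in> eigenpairs m A \<and> (mu, x') \<in> eigenpairs m A \<and>
       (\<exists>t::complex. t \<noteq> 0 \<and> mu = t ^ (m - 2) * lam \<and> x' = t *s x)}"

definition eigenpair_classes :: "nat \<Rightarrow> ('n::finite) rtensor \<Rightarrow> (complex \<times> (complex^'n)) set set" where
  "eigenpair_classes m A = eigenpairs m A // eigenpair_rel m A"

definition zero_eigenvalue_classes :: "nat \<Rightarrow> ('n::finite) rtensor \<Rightarrow> (complex \<times> (complex^'n)) set set" where
  "zero_eigenvalue_classes m A = {C \<in> eigenpair_classes m A. \<exists>x. (0, x) \<in> C}"

text \<open>The two tensors, dimension 2 (index type 2 with indices 0, 1), order 3.\<close>
definition A1 :: "2 rtensor" where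
  "A1 is = (if is = [0,0,0] \<or> is = [1,1,1] then 1 else 0)"

definition A2 :: "2 rtensor" where
  "A2 is = (if is = [0,0,0] then 1
            else if is = [0,1,1] \<or> is = [1,0,1] \<or> is = [1,1,0] then -1 else 0)"

end

theory Submission
  imports Defs
begin

text \<open>
  In order 3, rescaling an eigenvector by t multiplies its eigenvalue by t, so when 0 is
  not an eigenvalue every eigenpair class contains exactly one pair (1, v), i.e. the
  classes correspond to the solutions of A v^2 = v.  For x^3 + y^3 these are (1,0), (0,1),
  (1,1); for x^3 - 3xy^2 they are (1,0) and (-1/2, \<plusminus>\<surd>3/2).  An equivalence would
  write x^3 - 3xy^2 as a sum of two cubes of real linear forms, and comparing coefficients
  shows that this is impossible.
\<close>

lemma index_tuples_0: "index_tuples 0 = {[]}"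
  by (auto simp: index_tuples_def)

lemma index_tuples_Suc: "index_tuples (Suc n) = (\<lambda>(i, is). i # is) ` (UNIV \<times> index_tuples n)"
  by (auto simp: index_tuples_def image_iff length_Suc_conv)

lemma finite_index_tuples: "finite (index_tuples n :: ('n::finite) list set)"
  by (induction n) (auto simp: index_tuples_0 index_tuples_Suc)

lemma sum_index_tuples_Suc:
  "(\<Sum>is\<in>index_tuples (Suc n). f is) =
     (\<Sum>i\<in>(UNIV::('n::finite) set). \<Sum>is\<in>index_tuples n. f (i # is))"
proof -
  have "inj_on (\<lambda>(i::'n, is). i # is) (UNIV \<times> index_tuples n)"
    by (auto simp: inj_on_def)
  then show ?thesis
    by (simp add: index_tuples_Suc sum.reindex sum.cartesian_product finite_index_tuples split_def)
qed

lemma tensor_apply_smult: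
  "tensor_apply m A (c *s x) = c ^ (m - 1) *s tensor_apply m A x"
  by (simp add: tensor_apply_def vec_eq_iff prod.distrib sum_distrib_left mult_ac)

lemma eigenpairs_rescale_iff:
  assumes "m \<ge> 2" and "t \<noteq> 0"
  shows "(t ^ (m - 2) * lam, t *s x) \<in> eigenpairs m A \<longleftrightarrow> (lam, x) \<in> eigenpairs m A"
proof -
  have "t ^ (m - 1) = t ^ (m - 2) * t"
    using \<open>m \<ge> 2\<close> by (simp flip: power_Suc2 add: Suc_diff_Suc numeral_2_eq_2)
  then have "tensor_apply m A (t *s x) = (t ^ (m - 2) * lam) *s (t *s x) \<longleftrightarrow>
      t ^ (m - 1) *s tensor_apply m A x = t ^ (m - 1) *s (lam *s x)"
    by (simp add: tensor_apply_smult vector_smult_assoc mult_ac)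
  also have "\<dots> \<longleftrightarrow> tensor_apply m A x = lam *s x"
    using \<open>t \<noteq> 0\<close> by (simp only: vector_mul_lcancel power_eq_0_iff) simp
  finally show ?thesis
    using \<open>t \<noteq> 0\<close> by (simp add: eigenpairs_def)
qed

lemma equiv_eigenpair_rel: "equiv (eigenpairs m A) (eigenpair_rel m A)"
proof (rule equivI)
  show "refl_on (eigenpairs m A) (eigenpair_rel m A)"
    by (auto simp: refl_on_def eigenpair_rel_def intro!: exI[of _ 1])
  show "sym (eigenpair_rel m A)"
  proof (rule symI)
    fix p q
    assume "(p, q) \<in> eigenpair_rel m A"
    then obtain t where "p \<in> eigenpairs m A" "q \<in> eigenpairs m A" "t \<noteq> 0"
      "fst q = t ^ (m - 2) * fst p" "snd q = t *s snd p"
      by (auto simp: eigenpair_rel_def)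
    then show "(q, p) \<in> eigenpair_rel m A"
      by (cases p; cases q)
        (auto simp: eigenpair_rel_def power_inverse vector_smult_assoc intro!: exI[of _ "inverse t"])
  qed
  show "trans (eigenpair_rel m A)"
  proof (rule transI)
    fix p q r
    assume "(p, q) \<in> eigenpair_rel m A" "(q, r) \<in> eigenpair_rel m A"
    then obtain s t where "p \<in> eigenpairs m A" "r \<in> eigenpairs m A" "s \<noteq> 0" "t \<noteq> 0"
      "fst q = s ^ (m - 2) * fst p" "snd q = s *s snd p"
      "fst r = t ^ (m - 2) * fst q" "snd r = t *s snd q"
      by (auto simp: eigenpair_rel_def)
    then show "(p, r) \<in> eigenpair_rel m A"
      by (cases p; cases r)
        (auto simp: eigenpair_rel_def power_mult_distrib vector_smult_assoc intro!: exI[of _ "t * s"])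
  qed
qed (auto simp: eigenpair_rel_def)

definition normalized_eigenvectors :: "nat \<Rightarrow> ('n::finite) rtensor \<Rightarrow> (complex^'n) set" where
  "normalized_eigenvectors m A = {v. (1, v) \<in> eigenpairs m A}"

lemma eigenpair_rel_order3_iff:
  "((1, v), (lam, x)) \<in> eigenpair_rel 3 A \<longleftrightarrow>
     v \<in> normalized_eigenvectors 3 A \<and> lam \<noteq> 0 \<and> x = lam *s v"
  using eigenpairs_rescale_iff[of 3 lam 1 v A]
  by (auto simp: eigenpair_rel_def normalized_eigenvectors_def)

lemma bij_betw_normalized_eigenvectors_eigenpair_classes:
  assumes no_zero: "\<And>x. (0, x) \<notin> eigenpairs 3 A"
  shows "bij_betw (\<lambda>v. eigenpair_rel 3 A `` {(1, v)})
           (normalized_eigenvectors 3 A) (eigenpair_classes 3 A)"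
  unfolding bij_betw_def
proof (intro conjI subset_antisym)
  let ?r = "eigenpair_rel 3 A"
  have normalized_in: "(1, v) \<in> eigenpairs 3 A" if "v \<in> normalized_eigenvectors 3 A" for v
    using that by (simp add: normalized_eigenvectors_def)
  show "inj_on (\<lambda>v. ?r `` {(1, v)}) (normalized_eigenvectors 3 A)"
  proof (rule inj_onI)
    fix v w
    assume "v \<in> normalized_eigenvectors 3 A" "w \<in> normalized_eigenvectors 3 A"
      and "?r `` {(1, v)} = ?r `` {(1, w)}"
    then have "((1, v), (1, w)) \<in> ?r"
      using eq_equiv_class_iff[OF equiv_eigenpair_rel] normalized_in by blast
    then show "v = w"
      by (simp add: eigenpair_rel_order3_iff)
  qed
  show "(\<lambda>v. ?r `` {(1, v)}) ` normalized_eigenvectors 3 A \<subseteq> eigenpair_classes 3 A"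
    using normalized_in by (auto simp: eigenpair_classes_def intro: quotientI)
  show "eigenpair_classes 3 A \<subseteq> (\<lambda>v. ?r `` {(1, v)}) ` normalized_eigenvectors 3 A"
  proof
    fix X
    assume "X \<in> eigenpair_classes 3 A"
    then obtain lam x where eig: "(lam, x) \<in> eigenpairs 3 A" and X: "X = ?r `` {(lam, x)}"
      by (auto simp: eigenpair_classes_def elim!: quotientE)
    have "lam \<noteq> 0"
      using eig no_zero by blast
    define v where "v = inverse lam *s x"
    have "v \<in> normalized_eigenvectors 3 A"
      using eig eigenpairs_rescale_iff[of 3 "inverse lam" lam x A] \<open>lam \<noteq> 0\<close>
      by (simp add: normalized_eigenvectors_def v_def)
    moreover have "((1, v), (lam, x)) \<in> ?r"
      using \<open>v \<in> normalized_eigenvectors 3 A\<close> \<open>lam \<noteq> 0\<close>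
      by (simp add: eigenpair_rel_order3_iff v_def vector_smult_assoc)
    ultimately show "X \<in> (\<lambda>v. ?r `` {(1, v)}) ` normalized_eigenvectors 3 A"
      unfolding X using equiv_class_eq[OF equiv_eigenpair_rel] by blast
  qed
qed

lemma card_eigenpair_classes_order3:
  assumes "\<And>x. (0, x) \<notin> eigenpairs 3 A"
  shows "card (eigenpair_classes 3 A) = card (normalized_eigenvectors 3 A)"
  using bij_betw_same_card[OF bij_betw_normalized_eigenvectors_eigenpair_classes[OF assms]] by simp

lemma zero_eigenvalue_classes_eq_empty:
  assumes "\<And>x. (0, x) \<notin> eigenpairs m A"
  shows "zero_eigenvalue_classes m A = {}"
  using assms in_quotient_imp_subset[OF equiv_eigenpair_rel]
  by (fastforce simp: zero_eigenvalue_classes_def eigenpair_classes_def)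

lemma exhaust_2_zero_one: "i = 0 \<or> i = (1 :: 2)"
  using exhaust_2[of i] by auto

lemma UNIV_2_eq: "(UNIV :: 2 set) = {0, 1}"
  using exhaust_2_zero_one by auto

lemma vec_eq_2_iff: "(x :: 'a^2) = y \<longleftrightarrow> x $ 0 = y $ 0 \<and> x $ 1 = y $ 1"
  by (metis vec_eq_iff exhaust_2_zero_one)

lemma card_vec_2_coordinates: "card {v :: 'a^2. (v $ 0, v $ 1) \<in> S} = card S"
proof -
  have "inj (\<lambda>v :: 'a^2. (v $ 0, v $ 1))"
    by (auto intro: injI simp: vec_eq_2_iff)
  moreover have "S \<subseteq> range (\<lambda>v :: 'a^2. (v $ 0, v $ 1))"
  proof
    fix p assume "p \<in> S"
    show "p \<in> range (\<lambda>v :: 'a^2. (v $ 0, v $ 1))"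
      by (rule range_eqI[of _ _ "\<chi> i. if i = 0 then fst p else snd p"]) simp
  qed
  ultimately show ?thesis
    using card_vimage_inj by (fastforce simp: vimage_def)
qed

lemma tensor_apply_A1:
  "tensor_apply 3 A1 x $ 0 = (x $ 0)^2" "tensor_apply 3 A1 x $ 1 = (x $ 1)^2"
  by (simp_all add: tensor_apply_def sum_index_tuples_Suc index_tuples_0 UNIV_2_eq A1_def
      power2_eq_square lessThan_Suc eval_nat_numeral)

lemma tensor_apply_A2:
  "tensor_apply 3 A2 x $ 0 = (x $ 0)^2 - (x $ 1)^2" "tensor_apply 3 A2 x $ 1 = -2 * x $ 0 * x $ 1"
  by (simp_all add: tensor_apply_def sum_index_tuples_Suc index_tuples_0 UNIV_2_eq A2_def
      power2_eq_square lessThan_Suc eval_nat_numeral)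

lemma eigenpairs_A1_iff:
  "(lam, x) \<in> eigenpairs 3 A1 \<longleftrightarrow>
     (x $ 0, x $ 1) \<noteq> (0, 0) \<and> (x $ 0)^2 = lam * x $ 0 \<and> (x $ 1)^2 = lam * x $ 1"
  by (auto simp: eigenpairs_def vec_eq_2_iff tensor_apply_A1)

lemma eigenpairs_A2_iff:
  "(lam, x) \<in> eigenpairs 3 A2 \<longleftrightarrow>
     (x $ 0, x $ 1) \<noteq> (0, 0) \<and> (x $ 0)^2 - (x $ 1)^2 = lam * x $ 0 \<and>
     -2 * x $ 0 * x $ 1 = lam * x $ 1"
  by (auto simp: eigenpairs_def vec_eq_2_iff tensor_apply_A2)

lemma no_zero_eigenvalue_A1: "(0, x) \<notin> eigenpairs 3 A1"
  by (simp add: eigenpairs_A1_iff)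

lemma no_zero_eigenvalue_A2: "(0, x) \<notin> eigenpairs 3 A2"
  by (auto simp: eigenpairs_A2_iff)

lemma normalized_eigenvectors_A1:
  "normalized_eigenvectors 3 A1 = {v. (v $ 0, v $ 1) \<in> {(1, 0), (0, 1), (1, 1)}}"
proof -
  have idem: "a^2 = a \<longleftrightarrow> a = 0 \<or> a = 1" for a :: complex
    by (auto simp: power2_eq_square)
  show ?thesis
    by (auto simp: normalized_eigenvectors_def eigenpairs_A1_iff idem)
qed

lemma normalized_eigenvectors_A2:
  defines "s \<equiv> complex_of_real (sqrt 3) / 2"
  shows "normalized_eigenvectors 3 A2 = {v. (v $ 0, v $ 1) \<in> {(1, 0), (-1/2, s), (-1/2, -s)}}"
proof -
  have s_sq: "s * s = 3/4"
    by (simp add: s_def flip: of_real_mult)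
  have solutions: "(a, b) \<noteq> (0, 0) \<and> a^2 - b^2 = a \<and> -2 * a * b = b \<longleftrightarrow>
      (a, b) \<in> {(1, 0), (-1/2, s), (-1/2, -s)}" for a b :: complex
  proof
    assume eqs: "(a, b) \<noteq> (0, 0) \<and> a^2 - b^2 = a \<and> -2 * a * b = b"
    show "(a, b) \<in> {(1, 0), (-1/2, s), (-1/2, -s)}"
    proof (cases "b = 0")
      case True
      then have "a = 1"
        using eqs by (auto simp: power2_eq_square)
      then show ?thesis
        using True by simp
    next
      case False
      have "-2 * a * b = b"
        using eqs by simp
      then have "b * (2 * a + 1) = 0"
        by (simp add: algebra_simps) (metis add.commute neg_eq_iff_add_eq_0)
      then have "2 * a = -1"
        using False by (simp add: add_eq_0_iff2)
      then have a: "a = -1/2"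
        by (simp add: field_simps)
      have "b^2 = a^2 - a"
        using eqs by (simp add: eq_diff_eq diff_eq_eq add.commute)
      also have "\<dots> = s^2"
        unfolding a power2_eq_square s_sq by simp
      finally have "b^2 = s^2" .
      then show ?thesis
        using a by (auto simp: power2_eq_iff)
    qed
  next
    assume "(a, b) \<in> {(1, 0), (-1/2, s), (-1/2, -s)}"
    then show "(a, b) \<noteq> (0, 0) \<and> a^2 - b^2 = a \<and> -2 * a * b = b"
      by (auto simp: power2_eq_square s_sq)
  qed
  show ?thesis
    using solutions by (simp add: normalized_eigenvectors_def eigenpairs_A2_iff)
qed

lemma GL_equivalent_A1E:
  assumes "GL_equivalent 3 A1 B"
  obtains P :: "real^2^2" where
    "\<And>i j k. B [i, j, k] = P$0$i * P$0$j * P$0$k + P$1$i * P$1$j * P$1$k"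
proof -
  obtain P :: "real^2^2" where P: "\<And>js. js \<in> index_tuples 3 \<Longrightarrow>
      B js = (\<Sum>is\<in>index_tuples 3. A1 is * (\<Prod>k<3. P $ (is ! k) $ (js ! k)))"
    using assms unfolding GL_equivalent_def by blast
  have "B [i, j, k] = P$0$i * P$0$j * P$0$k + P$1$i * P$1$j * P$1$k" for i j k
  proof -
    have "[i, j, k] \<in> index_tuples 3"
      by (simp add: index_tuples_def)
    from P[OF this] show ?thesis
      by (simp add: sum_index_tuples_Suc index_tuples_0 numeral_eq_Suc UNIV_2_eq A1_def
          lessThan_Suc mult_ac)
  qed
  then show thesis
    by (rule that)
qed

text \<open>The hypotheses are the coefficients of x^3, x^2 y, x y^2, y^3 (the mixed ones divided
  by 3) in x^3 - 3 x y^2 = (p x + q y)^3 + (r x + s y)^3.\<close>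

lemma x3_minus_3xy2_not_sum_of_two_cubes:
  fixes p q r s :: real
  assumes "p^3 + r^3 = 1" "p^2 * q + r^2 * s = 0" "p * q^2 + r * s^2 = -1" "q^3 + s^3 = 0"
  shows False
proof -
  have "q^3 = (-s)^3"
    using assms(4) by simp
  then have qs: "q = -s"
    by (metis odd_real_root_power_cancel odd_numeral)
  then have "q * (p^2 - r^2) = 0"
    using assms(2) by (simp add: algebra_simps)
  moreover have "q \<noteq> 0"
    using assms(3) qs by auto
  ultimately have "p = r \<or> p = -r"
    by (simp add: power2_eq_iff)
  moreover have "p \<noteq> -r"
    using assms(1) by auto
  ultimately have pr: "p = r"
    by simp
  have "2 * p * q^2 = -1"
    using assms(3) pr qs by (simp add: algebra_simps)
  then have "p < 0"
    by (smt (verit) mult_nonneg_nonneg zero_le_power2)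
  moreover have "2 * p^3 = 1"
    using assms(1) pr by simp
  ultimately show False
    by (smt (verit) power_less_zero_eq zero_less_numeral odd_numeral)
qed

lemma not_GL_equivalent_A1_A2: "\<not> GL_equivalent 3 A1 A2"
proof
  assume "GL_equivalent 3 A1 A2"
  then obtain P :: "real^2^2" where
    P: "\<And>i j k. A2 [i, j, k] = P$0$i * P$0$j * P$0$k + P$1$i * P$1$j * P$1$k"
    by (auto elim: GL_equivalent_A1E)
  show False
  proof (rule x3_minus_3xy2_not_sum_of_two_cubes)
    show "(P$0$0)^3 + (P$1$0)^3 = 1"
      using P[of 0 0 0] by (simp add: A2_def power3_eq_cube)
    show "(P$0$0)^2 * P$0$1 + (P$1$0)^2 * P$1$1 = 0"
      using P[of 0 0 1] by (simp add: A2_def power2_eq_square)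
    show "P$0$0 * (P$0$1)^2 + P$1$0 * (P$1$1)^2 = -1"
      using P[of 0 1 1] by (simp add: A2_def power2_eq_square)
    show "(P$0$1)^3 + (P$1$1)^3 = 0"
      using P[of 1 1 1] by (simp add: A2_def power3_eq_cube)
  qed
qed

theorem proposition3p2:
  shows "\<not> GL_equivalent 3 A1 A2
    \<and> finite (eigenpair_classes 3 A1) \<and> finite (eigenpair_classes 3 A2)
    \<and> card (eigenpair_classes 3 A1) = card (eigenpair_classes 3 A2)
    \<and> card (zero_eigenvalue_classes 3 A1) = card (zero_eigenvalue_classes 3 A2)
    \<and> card (eigenpair_classes 3 A1) = 3 \<and> card (eigenpair_classes 3 A2) = 3
    \<and> zero_eigenvalue_classes 3 A1 = {} \<and> zero_eigenvalue_classes 3 A2 = {}"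
proof -
  have card_A1: "card (eigenpair_classes 3 A1) = 3"
    unfolding card_eigenpair_classes_order3[OF no_zero_eigenvalue_A1]
      normalized_eigenvectors_A1 card_vec_2_coordinates by simp
  have card_A2: "card (eigenpair_classes 3 A2) = 3"
    unfolding card_eigenpair_classes_order3[OF no_zero_eigenvalue_A2]
      normalized_eigenvectors_A2 card_vec_2_coordinates by simp
  have "finite (eigenpair_classes 3 A1)" "finite (eigenpair_classes 3 A2)"
    by (rule card_ge_0_finite, simp add: card_A1 card_A2)+
  then show ?thesis
    using not_GL_equivalent_A1_A2 card_A1 card_A2
      zero_eigenvalue_classes_eq_empty[OF no_zero_eigenvalue_A1]
      zero_eigenvalue_classes_eq_empty[OF no_zero_eigenvalue_A2]
    by simp
qed

end
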